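(* Let $\mathcal X_0\subset\mathcal X$ and $\mathcal Y_0\subset\mathcal Y$ be inclusions of operator systems and let $\alpha$ be a functorial operator system tensor product. Set $\mathcal R=\mathcal X\otimes_\alpha\mathcal Y$ and let $\mathcal R_0$ be $\mathcal X_0\otimes\mathcal Y_0$ with the operator system structure obtained by restriction from $\mathcal X\otimes_\alpha\mathcal Y$. Then $$\mathrm{Ind}_{\mathrm{CP}}(\mathcal R:\mathcal R_0)\le\mathrm{Ind}_{\mathrm{CP}}(\mathcal X:\mathcal X_0)\,\mathrm{Ind}_{\mathrm{CP}}(\mathcal Y:\mathcal Y_0).$$
   Context: For an operator system $\mathcal X$ with unit $1$, $\mathrm{CP}(\mathcal X)$ denotes the completely positive maps $\mathcal X\to\mathcal X$ and $\mathrm{CP}_1(\mathcal X)$ the set of $\varphi\in\mathrm{CP}(\mathcal X)$ with $\varphi(\mathbb C1)\subset\mathbb C1$. For an operator subsystem $\mathcal X_0\subset\mathcal X$, $\mathrm{Ind}_{\mathrm{CP}}(\mathcal X:\mathcal X_0)=\inf\{\|\varphi(1)\|:\varphi\in\mathrm{CP}_1(\mathcal X),\ \varphi(\mathcal X)\subset\mathcal X_0,\ \varphi-\mathrm{id}_{\mathcal X}\in\mathrm{CP}(\mathcal X)\}$ ($\infty$ if empty). An operator system structure on $\mathcal X\otimes\mathcal Y$ is a family of cones $\mathcal R_n\subset M_n(\mathcal X\otimes\mathcal Y)_h$ such that (1) $\mathcal X\otimes\mathcal Y$ with these cones and unit $1_{\mathcal X}\otimes1_{\mathcal Y}$ is an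 operator system; (2) $M_n(\mathcal X)^+\otimes M_m(\mathcal Y)^+\subset\mathcal R_{nm}$; (3) for unital completely positive $u:\mathcal X\to M_n$, $v:\mathcal Y\to M_m$, the map $u\otimes v:\mathcal X\otimes\mathcal Y\to M_{nm}$ is unital completely positive. An operator system tensor product $\alpha$ assigns such a structure $\mathcal X\otimes_\alpha\mathcal Y$ to every pair of operator systems; it is functorial if for all operator systems $\mathcal X,\mathcal Y,\mathcal S,\mathcal T$ and unital completely positive $u:\mathcal X\to\mathcal S$, $v:\mathcal Y\to\mathcal T$, the map $u\otimes v:\mathcal X\otimes_\alpha\mathcal Y\to\mathcal S\otimes_\alpha\mathcal T$ is unital completely positive. *)

theory Defs
  imports Complex_Main "HOL-Library.Function_Algebras" "HOL-Library.Extended_Real"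
begin

text \<open>Abstract operator systems (Choi--Effros), represented by a carrier set inside an
ambient additive group type, together with complex scalar multiplication, involution,
unit and the matrix cones.  An n x n matrix over V is a function nat => nat => V that
vanishes outside the index range {0..<n} x {0..<n}.\<close>

record 'v opsys =
  ocarrier :: "'v set"
  oscal :: "complex \<Rightarrow> 'v \<Rightarrow> 'v"
  ostar :: "'v \<Rightarrow> 'v"
  ounit :: "'v"
  ocone :: "nat \<Rightarrow> (nat \<Rightarrow> nat \<Rightarrow> 'v) set"

type_synonym 'v mat = "nat \<Rightarrow> nat \<Rightarrow> 'v"

definition Mn :: "'v::zero set \<Rightarrow> nat \<Rightarrow> 'v mat set" where
  "Mn S n = {A. (\<forall>i j. i < n \<and> j < n \<longrightarrow> A i j \<in> S) \<and>
                 (\<forall>i j. \<not> (i < n \<and> j < n) \<longrightarrow> A i j = 0)}"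

definition herm :: "('v::zero) opsys \<Rightarrow> nat \<Rightarrow> 'v mat set" where
  "herm X n = {A \<in> Mn (ocarrier X) n. \<forall>i<n. \<forall>j<n. A j i = ostar X (A i j)}"

definition unitm :: "('v::zero) opsys \<Rightarrow> nat \<Rightarrow> 'v mat" where
  "unitm X n = (\<lambda>i j. if i < n \<and> j < n \<and> i = j then ounit X else 0)"

definition madd :: "('v::plus) mat \<Rightarrow> 'v mat \<Rightarrow> 'v mat" where
  "madd A B = (\<lambda>i j. A i j + B i j)"

definition mscal :: "'v opsys \<Rightarrow> complex \<Rightarrow> 'v mat \<Rightarrow> 'v mat" where
  "mscal X c A = (\<lambda>i j. oscal X c (A i j))"

text \<open>beta^* A beta for an n x m complex matrix beta and A in M_n(X).\<close>
definition congr :: "('v::comm_monoid_add) opsys \<Rightarrow> nat \<Rightarrow> nat \<Rightarrow> complex mat \<Rightarrow> 'v mat \<Rightarrow> 'v mat" where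
  "congr X n m \<beta> A = (\<lambda>i j. if i < m \<and> j < m
      then (\<Sum>k<n. \<Sum>l<n. oscal X (cnj (\<beta> k i) * \<beta> l j) (A k l)) else 0)"

definition is_opsys :: "('v::ab_group_add) opsys \<Rightarrow> bool" where
  "is_opsys X \<longleftrightarrow>
     0 \<in> ocarrier X \<and>
     (\<forall>x\<in>ocarrier X. \<forall>y\<in>ocarrier X. x + y \<in> ocarrier X) \<and>
     (\<forall>c. \<forall>x\<in>ocarrier X. oscal X c x \<in> ocarrier X) \<and>
     (\<forall>c. \<forall>x\<in>ocarrier X. \<forall>y\<in>ocarrier X. oscal X c (x + y) = oscal X c x + oscal X c y) \<and>
     (\<forall>c d. \<forall>x\<in>ocarrier X. oscal X (c + d) x = oscal X c x + oscal X d x) \<and>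
     (\<forall>c d. \<forall>x\<in>ocarrier X. oscal X (c * d) x = oscal X c (oscal X d x)) \<and>
     (\<forall>x\<in>ocarrier X. oscal X 1 x = x) \<and>
     (\<forall>x\<in>ocarrier X. ostar X x \<in> ocarrier X) \<and>
     (\<forall>x\<in>ocarrier X. ostar X (ostar X x) = x) \<and>
     (\<forall>x\<in>ocarrier X. \<forall>y\<in>ocarrier X. ostar X (x + y) = ostar X x + ostar X y) \<and>
     (\<forall>c. \<forall>x\<in>ocarrier X. ostar X (oscal X c x) = oscal X (cnj c) (ostar X x)) \<and>
     ounit X \<in> ocarrier X \<and> ostar X (ounit X) = ounit X \<and>
     (\<forall>n>0. ocone X n \<subseteq> herm X n) \<and>
     (\<forall>n>0. \<forall>A\<in>ocone X n. \<forall>B\<in>ocone X n. madd A B \<in> ocone X n) \<and>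
     (\<forall>n>0. \<forall>r::real. r \<ge> 0 \<longrightarrow> (\<forall>A\<in>ocone X n. mscal X (of_real r) A \<in> ocone X n)) \<and>
     (\<forall>n>0. \<forall>m>0. \<forall>\<beta>. \<forall>A\<in>ocone X n. congr X n m \<beta> A \<in> ocone X m) \<and>
     (\<forall>n>0. \<forall>A\<in>ocone X n. (\<lambda>i j. - A i j) \<in> ocone X n \<longrightarrow> A = (\<lambda>i j. 0)) \<and>
     (\<forall>n>0. \<forall>A\<in>herm X n. \<exists>r::real. r > 0 \<and>
         madd (mscal X (of_real r) (unitm X n)) A \<in> ocone X n) \<and>
     (\<forall>n>0. \<forall>A\<in>herm X n.
         (\<forall>r::real. r > 0 \<longrightarrow> madd (mscal X (of_real r) (unitm X n)) A \<in> ocone X n)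
         \<longrightarrow> A \<in> ocone X n)"

definition restrict_os :: "('v::zero) opsys \<Rightarrow> 'v set \<Rightarrow> 'v opsys" where
  "restrict_os X S = X\<lparr>ocarrier := S, ocone := (\<lambda>n. ocone X n \<inter> Mn S n)\<rparr>"

definition subsystem :: "('v::ab_group_add) opsys \<Rightarrow> 'v opsys \<Rightarrow> bool" where
  "subsystem X0 X \<longleftrightarrow> is_opsys X \<and> ocarrier X0 \<subseteq> ocarrier X \<and>
      X0 = restrict_os X (ocarrier X0) \<and> is_opsys X0"

definition cp :: "('v::ab_group_add) opsys \<Rightarrow> ('w::ab_group_add) opsys \<Rightarrow> ('v \<Rightarrow> 'w) \<Rightarrow> bool" where
  "cp X S u \<longleftrightarrow>
     (\<forall>x\<in>ocarrier X. u x \<in> ocarrier S) \<and>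
     (\<forall>x\<in>ocarrier X. \<forall>y\<in>ocarrier X. u (x + y) = u x + u y) \<and>
     (\<forall>c. \<forall>x\<in>ocarrier X. u (oscal X c x) = oscal S c (u x)) \<and>
     (\<forall>n>0. \<forall>A\<in>ocone X n. (\<lambda>i j. u (A i j)) \<in> ocone S n)"

definition ucp :: "('v::ab_group_add) opsys \<Rightarrow> ('w::ab_group_add) opsys \<Rightarrow> ('v \<Rightarrow> 'w) \<Rightarrow> bool" where
  "ucp X S u \<longleftrightarrow> cp X S u \<and> u (ounit X) = ounit S"

definition psd :: "nat \<Rightarrow> complex mat \<Rightarrow> bool" where
  "psd N M \<longleftrightarrow> (\<forall>\<xi>::nat \<Rightarrow> complex.
     Im (\<Sum>i<N. \<Sum>j<N. cnj (\<xi> i) * M i j * \<xi> j) = 0 \<and>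
     Re (\<Sum>i<N. \<Sum>j<N. cnj (\<xi> i) * M i j * \<xi> j) \<ge> 0)"

text \<open>Kronecker-type block matrix: entry (i*m+k, j*m+l) is F i j k l.\<close>
definition kron :: "nat \<Rightarrow> nat \<Rightarrow> (nat \<Rightarrow> nat \<Rightarrow> nat \<Rightarrow> nat \<Rightarrow> 'a::zero) \<Rightarrow> 'a mat" where
  "kron n m F = (\<lambda>p q. if p < n * m \<and> q < n * m
      then F (p div m) (q div m) (p mod m) (q mod m) else 0)"

definition ucp_mat :: "('v::ab_group_add) opsys \<Rightarrow> nat \<Rightarrow> ('v \<Rightarrow> complex mat) \<Rightarrow> bool" where
  "ucp_mat X n u \<longleftrightarrow>
     (\<forall>x\<in>ocarrier X. u x \<in> Mn UNIV n) \<and>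
     (\<forall>x\<in>ocarrier X. \<forall>y\<in>ocarrier X. u (x + y) = (\<lambda>i j. u x i j + u y i j)) \<and>
     (\<forall>c. \<forall>x\<in>ocarrier X. u (oscal X c x) = (\<lambda>i j. c * u x i j)) \<and>
     u (ounit X) = (\<lambda>i j. if i < n \<and> j < n \<and> i = j then 1 else 0) \<and>
     (\<forall>k>0. \<forall>A\<in>ocone X k. psd (k * n) (kron k n (\<lambda>i j p q. u (A i j) p q)))"

text \<open>An element of X (x) Y is represented faithfully by the
bilinear pairing it induces on (linear functional on X) x (linear functional on Y);
x (x) y corresponds to (f,g) |-> f x * g y.  Linear functionals on X are normalised to
vanish outside the carrier.\<close>
definition linfun :: "('v::ab_group_add) opsys \<Rightarrow> ('v \<Rightarrow> complex) set" where
  "linfun X = {f. (\<forall>x\<in>ocarrier X. \<forall>y\<in>ocarrier X. f (x + y) = f x + f y) \<and>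
                  (\<forall>c. \<forall>x\<in>ocarrier X. f (oscal X c x) = c * f x) \<and>
                  (\<forall>x. x \<notin> ocarrier X \<longrightarrow> f x = 0)}"

type_synonym ('x, 'y) tens = "('x \<Rightarrow> complex) \<Rightarrow> ('y \<Rightarrow> complex) \<Rightarrow> complex"

definition tensor :: "('x::ab_group_add) opsys \<Rightarrow> ('y::ab_group_add) opsys \<Rightarrow> 'x \<Rightarrow> 'y \<Rightarrow> ('x, 'y) tens" where
  "tensor X Y x y = (\<lambda>f g. if f \<in> linfun X \<and> g \<in> linfun Y then f x * g y else 0)"

definition tens_span :: "('x::ab_group_add) opsys \<Rightarrow> ('y::ab_group_add) opsys \<Rightarrow> 'x set \<Rightarrow> 'y set \<Rightarrow> ('x, 'y) tens set" where
  "tens_span X Y A B = {(\<lambda>f g. \<Sum>k<N. tensor X Y (a k) (b k) f g) | (N::nat) a b.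
                          \<forall>k<N. a k \<in> A \<and> b k \<in> B}"

definition conjf :: "('v::ab_group_add) opsys \<Rightarrow> ('v \<Rightarrow> complex) \<Rightarrow> ('v \<Rightarrow> complex)" where
  "conjf X f = (\<lambda>x. if x \<in> ocarrier X then cnj (f (ostar X x)) else 0)"

text \<open>Involution on X (x) Y: (x (x) y)^* = x^* (x) y^*.\<close>
definition tstar :: "('x::ab_group_add) opsys \<Rightarrow> ('y::ab_group_add) opsys \<Rightarrow> ('x, 'y) tens \<Rightarrow> ('x, 'y) tens" where
  "tstar X Y t = (\<lambda>f g. if f \<in> linfun X \<and> g \<in> linfun Y
                         then cnj (t (conjf X f) (conjf Y g)) else 0)"

definition tensor_os :: "('x::ab_group_add) opsys \<Rightarrow> ('y::ab_group_add) opsys \<Rightarrow>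
    (nat \<Rightarrow> ('x, 'y) tens mat set) \<Rightarrow> ('x, 'y) tens opsys" where
  "tensor_os X Y R = \<lparr>ocarrier = tens_span X Y (ocarrier X) (ocarrier Y),
                      oscal = (\<lambda>c t f g. c * t f g),
                      ostar = tstar X Y,
                      ounit = tensor X Y (ounit X) (ounit Y),
                      ocone = R\<rparr>"

definition tmap :: "('x::ab_group_add) opsys \<Rightarrow> ('y::ab_group_add) opsys \<Rightarrow> 'x opsys \<Rightarrow> 'y opsys \<Rightarrow>
    ('x \<Rightarrow> 'x) \<Rightarrow> ('y \<Rightarrow> 'y) \<Rightarrow> ('x, 'y) tens \<Rightarrow> ('x, 'y) tens" where
  "tmap X Y S T u v t = (\<lambda>f g. if f \<in> linfun S \<and> g \<in> linfun T
      then t (\<lambda>x. if x \<in> ocarrier X then f (u x) else 0)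
             (\<lambda>y. if y \<in> ocarrier Y then g (v y) else 0)
      else 0)"

definition os_structure :: "('x::ab_group_add) opsys \<Rightarrow> ('y::ab_group_add) opsys \<Rightarrow>
    (nat \<Rightarrow> ('x, 'y) tens mat set) \<Rightarrow> bool" where
  "os_structure X Y R \<longleftrightarrow>
     is_opsys (tensor_os X Y R) \<and>
     (\<forall>n>0. \<forall>m>0. \<forall>A\<in>ocone X n. \<forall>B\<in>ocone Y m.
        kron n m (\<lambda>i j k l. tensor X Y (A i j) (B k l)) \<in> R (n * m)) \<and>
     (\<forall>n>0. \<forall>m>0. \<forall>u v. ucp_mat X n u \<and> ucp_mat Y m v \<longrightarrow>
        ucp_mat (tensor_os X Y R) (n * m)
          (\<lambda>t. kron n m (\<lambda>i j k l. t (\<lambda>x. if x \<in> ocarrier X then u x i j else 0)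
                                     (\<lambda>y. if y \<in> ocarrier Y then v y k l else 0))))"

definition os_tensor_product :: "('x::ab_group_add opsys \<Rightarrow> 'y::ab_group_add opsys \<Rightarrow>
    nat \<Rightarrow> ('x, 'y) tens mat set) \<Rightarrow> bool" where
  "os_tensor_product \<alpha> \<longleftrightarrow>
     (\<forall>X Y. is_opsys X \<and> is_opsys Y \<longrightarrow> os_structure X Y (\<alpha> X Y))"

definition functorial :: "('x::ab_group_add opsys \<Rightarrow> 'y::ab_group_add opsys \<Rightarrow>
    nat \<Rightarrow> ('x, 'y) tens mat set) \<Rightarrow> bool" where
  "functorial \<alpha> \<longleftrightarrow>
     (\<forall>X S Y T. is_opsys X \<and> is_opsys Y \<and> is_opsys S \<and> is_opsys T \<longrightarrow>
        (\<forall>u v. ucp X S u \<and> ucp Y T v \<longrightarrow>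
           ucp (tensor_os X Y (\<alpha> X Y)) (tensor_os S T (\<alpha> S T)) (tmap X Y S T u v)))"

definition opnorm :: "('v::ab_group_add) opsys \<Rightarrow> 'v \<Rightarrow> real" where
  "opnorm X x = Inf {r. r \<ge> 0 \<and>
     (\<lambda>i j. if i < 2 \<and> j < 2 then
              (if i = j then oscal X (of_real r) (ounit X) else if i = 0 then x else ostar X x)
            else 0) \<in> ocone X 2}"

text \<open>Ind_CP(X : X0), infinity if the defining set is empty.\<close>
definition ind_cp :: "('v::ab_group_add) opsys \<Rightarrow> 'v opsys \<Rightarrow> ereal" where
  "ind_cp X X0 = Inf {ereal (opnorm X (\<phi> (ounit X))) | \<phi>.
      cp X X \<phi> \<and>
      (\<forall>c. \<exists>d. \<phi> (oscal X c (ounit X)) = oscal X d (ounit X)) \<and>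
      (\<forall>x\<in>ocarrier X. \<phi> x \<in> ocarrier X0) \<and>
      cp X X (\<lambda>x. \<phi> x - x)}"

end

theory Submission
  imports Defs
begin

text \<open>A map \<open>\<phi>\<close> competing in the infimum that defines the index sends the unit to a real multiple
\<open>(1 + r) \<cdot> 1\<close> with \<open>r \<ge> 0\<close> (positivity of \<open>\<phi> - id\<close> at the unit), and the norm of
\<open>\<phi> 1\<close> is exactly \<open>1 + r\<close>.  Given competitors \<open>\<phi>\<close> for \<open>X\<^sub>0 \<subseteq> X\<close> and \<open>\<psi>\<close> for
\<open>Y\<^sub>0 \<subseteq> Y\<close>, the map \<open>\<phi> \<otimes> \<psi>\<close> competes for \<open>R\<^sub>0 \<subseteq> R\<close>: it is completely positive
by functoriality applied to the unital maps \<open>\<phi>/(1 + r)\<close> and \<open>\<psi>/(1 + s)\<close>, it maps into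
\<open>X\<^sub>0 \<otimes> Y\<^sub>0\<close>, and \<open>\<phi> \<otimes> \<psi> - id = (\<phi> - id) \<otimes> \<psi> + id \<otimes> (\<psi> - id)\<close> is completely positive
for the same reason.  Its value at the unit is \<open>(1 + r)(1 + s) \<cdot> 1\<close>, so taking infima gives
the product bound.  If one of the units vanishes, the tensor product is the zero space and
its index is \<open>0\<close>.\<close>

lemma os_zero: "is_opsys X \<Longrightarrow> 0 \<in> ocarrier X"
  unfolding is_opsys_def by (elim conjE) blast
lemma os_add: "is_opsys X \<Longrightarrow> x \<in> ocarrier X \<Longrightarrow> y \<in> ocarrier X \<Longrightarrow> x + y \<in> ocarrier X"
  unfolding is_opsys_def by (elim conjE) blast
lemma os_scal: "is_opsys X \<Longrightarrow> x \<in> ocarrier X \<Longrightarrow> oscal X c x \<in> ocarrier X"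
  unfolding is_opsys_def by (elim conjE) blast
lemma os_scal_add:
  "is_opsys X \<Longrightarrow> x \<in> ocarrier X \<Longrightarrow> y \<in> ocarrier X \<Longrightarrow> oscal X c (x + y) = oscal X c x + oscal X c y"
  unfolding is_opsys_def by (elim conjE) blast
lemma os_add_scal: "is_opsys X \<Longrightarrow> x \<in> ocarrier X \<Longrightarrow> oscal X (c + d) x = oscal X c x + oscal X d x"
  unfolding is_opsys_def by (elim conjE) blast
lemma os_mult_scal: "is_opsys X \<Longrightarrow> x \<in> ocarrier X \<Longrightarrow> oscal X (c * d) x = oscal X c (oscal X d x)"
  unfolding is_opsys_def by (elim conjE) blast
lemma os_one_scal: "is_opsys X \<Longrightarrow> x \<in> ocarrier X \<Longrightarrow> oscal X 1 x = x"
  unfolding is_opsys_def by (elim conjE) blast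
lemma os_star: "is_opsys X \<Longrightarrow> x \<in> ocarrier X \<Longrightarrow> ostar X x \<in> ocarrier X"
  unfolding is_opsys_def by (elim conjE) blast
lemma os_star_star: "is_opsys X \<Longrightarrow> x \<in> ocarrier X \<Longrightarrow> ostar X (ostar X x) = x"
  unfolding is_opsys_def by (elim conjE) blast
lemma os_star_add:
  "is_opsys X \<Longrightarrow> x \<in> ocarrier X \<Longrightarrow> y \<in> ocarrier X \<Longrightarrow> ostar X (x + y) = ostar X x + ostar X y"
  unfolding is_opsys_def by (elim conjE) blast
lemma os_star_scal:
  "is_opsys X \<Longrightarrow> x \<in> ocarrier X \<Longrightarrow> ostar X (oscal X c x) = oscal X (cnj c) (ostar X x)"
  unfolding is_opsys_def by (elim conjE) blast
lemma os_unit: "is_opsys X \<Longrightarrow> ounit X \<in> ocarrier X"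
  unfolding is_opsys_def by (elim conjE) blast
lemma os_star_unit: "is_opsys X \<Longrightarrow> ostar X (ounit X) = ounit X"
  unfolding is_opsys_def by (elim conjE) blast
lemma os_cone_herm: "is_opsys X \<Longrightarrow> n > 0 \<Longrightarrow> A \<in> ocone X n \<Longrightarrow> A \<in> herm X n"
  unfolding is_opsys_def by (elim conjE) (meson subsetD)
lemma os_cone_add:
  "is_opsys X \<Longrightarrow> n > 0 \<Longrightarrow> A \<in> ocone X n \<Longrightarrow> B \<in> ocone X n \<Longrightarrow> madd A B \<in> ocone X n"
  unfolding is_opsys_def by meson
lemma os_cone_scal:
  "is_opsys X \<Longrightarrow> n > 0 \<Longrightarrow> r \<ge> 0 \<Longrightarrow> A \<in> ocone X n \<Longrightarrow> mscal X (of_real r) A \<in> ocone X n"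
  unfolding is_opsys_def by meson
lemma os_cone_congr:
  "is_opsys X \<Longrightarrow> n > 0 \<Longrightarrow> m > 0 \<Longrightarrow> A \<in> ocone X n \<Longrightarrow> congr X n m \<beta> A \<in> ocone X m"
  unfolding is_opsys_def by meson
lemma os_cone_proper:
  "is_opsys X \<Longrightarrow> n > 0 \<Longrightarrow> A \<in> ocone X n \<Longrightarrow> (\<lambda>i j. - A i j) \<in> ocone X n \<Longrightarrow> A = (\<lambda>i j. 0)"
  unfolding is_opsys_def by meson
lemma os_archimedean:
  "is_opsys X \<Longrightarrow> n > 0 \<Longrightarrow> A \<in> herm X n \<Longrightarrow>
     \<exists>r::real. r > 0 \<and> madd (mscal X (of_real r) (unitm X n)) A \<in> ocone X n"
  unfolding is_opsys_def by meson

lemma os_cone_entry: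
  assumes X: "is_opsys X" and "n > 0" and "A \<in> ocone X n"
  shows "A i j \<in> ocarrier X"
proof -
  have "A \<in> Mn (ocarrier X) n"
    using os_cone_herm[OF assms] unfolding herm_def by blast
  then show ?thesis
    using os_zero[OF X] unfolding Mn_def by (cases "i < n \<and> j < n") auto
qed

lemma oscal_zero_left: "is_opsys X \<Longrightarrow> x \<in> ocarrier X \<Longrightarrow> oscal X 0 x = 0"
  using os_add_scal[of X x 0 0] by simp
lemma oscal_zero_right: "is_opsys X \<Longrightarrow> oscal X c 0 = 0"
  using os_scal_add[of X 0 0 c] os_zero[of X] by simp
lemma oscal_uminus_left: "is_opsys X \<Longrightarrow> x \<in> ocarrier X \<Longrightarrow> oscal X (- c) x = - oscal X c x"
  using os_add_scal[of X x c "-c"] oscal_zero_left[of X x] by (simp add: eq_neg_iff_add_eq_0 add.commute)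
lemma oscal_diff_left: "is_opsys X \<Longrightarrow> x \<in> ocarrier X \<Longrightarrow> oscal X (c - d) x = oscal X c x - oscal X d x"
  using os_add_scal[of X x "c - d" d] by (metis add_diff_cancel diff_add_cancel)
lemma os_diff: "is_opsys X \<Longrightarrow> x \<in> ocarrier X \<Longrightarrow> y \<in> ocarrier X \<Longrightarrow> x - y \<in> ocarrier X"
  using oscal_uminus_left[of X y 1] os_one_scal[of X y] os_scal[of X y "-1"] os_add[of X x "- y"]
  by simp
lemma ostar_zero: "is_opsys X \<Longrightarrow> ostar X 0 = 0"
  using os_star_add[of X 0 0] os_zero[of X] by simp
lemma oscal_sum:
  assumes "is_opsys X" and "x \<in> ocarrier X" and "finite A"
  shows "(\<Sum>k\<in>A. oscal X (f k) x) = oscal X (\<Sum>k\<in>A. f k) x"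
  using \<open>finite A\<close> by induction (simp_all add: oscal_zero_left[OF assms(1,2)] os_add_scal[OF assms(1,2)])

lemma zero_mat_cone:
  assumes X: "is_opsys X" and n: "n > 0"
  shows "(\<lambda>i j. 0) \<in> ocone X n"
proof -
  have "(\<lambda>i j. 0) \<in> herm X n"
    by (simp add: herm_def Mn_def os_zero[OF X] ostar_zero[OF X])
  then obtain A where "A \<in> ocone X n"
    using os_archimedean[OF X n] by blast
  moreover have "mscal X 0 A = (\<lambda>i j. 0)"
    using calculation os_cone_entry[OF X n] oscal_zero_left[OF X] by (auto simp: mscal_def)
  ultimately show ?thesis
    using os_cone_scal[OF X n, of 0] by fastforce
qed

lemma unitm_cone:
  assumes X: "is_opsys X" and n: "n > 0"
  shows "unitm X n \<in> ocone X n"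
proof -
  note U = os_unit[OF X]
  have "unitm X n \<in> herm X n"
    by (auto simp: herm_def Mn_def unitm_def os_zero[OF X] ostar_zero[OF X] U os_star_unit[OF X])
  then obtain r :: real where r: "r > 0" "madd (mscal X (of_real r) (unitm X n)) (unitm X n) \<in> ocone X n"
    using os_archimedean[OF X n] by blast
  have "madd (mscal X (of_real r) (unitm X n)) (unitm X n) = mscal X (of_real (r + 1)) (unitm X n)"
    by (auto simp: madd_def mscal_def unitm_def fun_eq_iff oscal_zero_right[OF X]
        os_add_scal[OF X U] os_one_scal[OF X U])
  then have "mscal X (of_real (1 / (r + 1))) (mscal X (of_real (r + 1)) (unitm X n)) \<in> ocone X n"
    using os_cone_scal[OF X n, of "1 / (r + 1)"] r by simp
  moreover have "complex_of_real (r + 1) \<noteq> 0"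
    using r by (simp only: of_real_eq_0_iff)
  then have "oscal X (of_real (1 / (r + 1))) (oscal X (of_real (r + 1)) (ounit X)) = ounit X"
    using r os_mult_scal[OF X U, of "of_real (1 / (r + 1))" "of_real (r + 1)", symmetric]
    by (simp add: os_one_scal[OF X U] flip: of_real_mult)
  then have "mscal X (of_real (1 / (r + 1))) (mscal X (of_real (r + 1)) (unitm X n)) = unitm X n"
    by (auto simp: mscal_def unitm_def fun_eq_iff oscal_zero_right[OF X])
  ultimately show ?thesis
    by simp
qed

definition mat1 :: "'v::zero \<Rightarrow> 'v mat" where
  "mat1 x = (\<lambda>i j. if i < 1 \<and> j < 1 then x else 0)"

lemma mat1_eq_zero_iff: "mat1 x = (\<lambda>i j. 0) \<longleftrightarrow> x = 0"
  unfolding mat1_def by (metis less_one)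

lemma unitm_1: "unitm X 1 = mat1 (ounit X)"
  by (auto simp: unitm_def mat1_def fun_eq_iff)

lemma mscal_mat1: "is_opsys X \<Longrightarrow> mscal X c (mat1 x) = mat1 (oscal X c x)"
  using oscal_zero_right by (auto simp: mat1_def mscal_def fun_eq_iff)

lemma scalar_unit_cone1E:
  assumes X: "is_opsys X" and u: "ounit X \<noteq> 0" and c: "mat1 (oscal X c (ounit X)) \<in> ocone X 1"
  obtains \<rho> :: real where "\<rho> \<ge> 0" "c = of_real \<rho>"
proof -
  note U = os_unit[OF X]
  have "mat1 (oscal X c (ounit X)) \<in> herm X 1"
    using os_cone_herm[OF X _ c] by simp
  then have "oscal X c (ounit X) = oscal X (cnj c) (ounit X)"
    unfolding herm_def mat1_def using os_star_scal[OF X U] os_star_unit[OF X] by auto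
  then have e: "oscal X (cnj c - c) (ounit X) = 0"
    using oscal_diff_left[OF X U] by simp
  have "cnj c = c"
  proof (rule ccontr)
    assume "cnj c \<noteq> c"
    then have "oscal X (1 / (cnj c - c)) (oscal X (cnj c - c) (ounit X)) = ounit X"
      using os_mult_scal[OF X U, of "1 / (cnj c - c)" "cnj c - c", symmetric] os_one_scal[OF X U] by simp
    then show False using e oscal_zero_right[OF X] u by simp
  qed
  then obtain \<rho> :: real where \<rho>: "c = of_real \<rho>"
    by (metis Reals_cases Reals_cnj_iff)
  have "\<rho> \<ge> 0"
  proof (rule ccontr)
    assume neg: "\<not> \<rho> \<ge> 0"
    have "oscal X (of_real (-1 / \<rho>)) (oscal X c (ounit X)) = oscal X (of_real (-1 / \<rho>) * c) (ounit X)"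
      by (rule os_mult_scal[OF X U, symmetric])
    also have "of_real (-1 / \<rho>) * c = -1"
      using neg \<rho> by (simp flip: of_real_mult)
    also have "oscal X (-1) (ounit X) = - ounit X"
      using oscal_uminus_left[OF X U, of 1] os_one_scal[OF X U] by simp
    finally have "mat1 (- ounit X) \<in> ocone X 1"
      using os_cone_scal[OF X _ _ c, of "-1 / \<rho>"] neg by (simp add: mscal_mat1[OF X])
    moreover have "(\<lambda>i j. - mat1 (ounit X) i j) = mat1 (- ounit X)"
      by (auto simp: mat1_def fun_eq_iff)
    moreover have "mat1 (ounit X) \<in> ocone X 1"
      using unitm_cone[OF X, of 1] by (simp only: unitm_1 zero_less_one)
    ultimately have "mat1 (ounit X) = (\<lambda>i j. 0)"
      using os_cone_proper[OF X, of 1 "mat1 (ounit X)"] by simp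
    then show False using u by (simp add: mat1_eq_zero_iff)
  qed
  with \<rho> show ?thesis using that by blast
qed

lemma cp_in: "cp X S u \<Longrightarrow> x \<in> ocarrier X \<Longrightarrow> u x \<in> ocarrier S"
  unfolding cp_def by blast
lemma cp_add: "cp X S u \<Longrightarrow> x \<in> ocarrier X \<Longrightarrow> y \<in> ocarrier X \<Longrightarrow> u (x + y) = u x + u y"
  unfolding cp_def by blast
lemma cp_scal: "cp X S u \<Longrightarrow> x \<in> ocarrier X \<Longrightarrow> u (oscal X c x) = oscal S c (u x)"
  unfolding cp_def by blast
lemma cp_cone: "cp X S u \<Longrightarrow> n > 0 \<Longrightarrow> A \<in> ocone X n \<Longrightarrow> (\<lambda>i j. u (A i j)) \<in> ocone S n"
  unfolding cp_def by blast
lemma cp_0: "is_opsys X \<Longrightarrow> cp X S u \<Longrightarrow> u 0 = 0"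
  using cp_add[of X S u 0 0] os_zero[of X] by simp

lemma cp_mat1: "is_opsys X \<Longrightarrow> cp X S w \<Longrightarrow> (\<lambda>i j. w (mat1 x i j)) = mat1 (w x)"
  using cp_0 by (auto simp: mat1_def fun_eq_iff)

lemma cp_id: "cp X X (\<lambda>x. x)"
  unfolding cp_def by simp

lemma cp_zero:
  assumes X: "is_opsys X" and S: "is_opsys S" and w: "\<forall>x\<in>ocarrier X. w x = 0"
  shows "cp X S w"
  using w os_add[OF X] os_scal[OF X] os_cone_entry[OF X] zero_mat_cone[OF S]
  by (simp add: cp_def os_zero[OF S] oscal_zero_right[OF S])

lemma cp_scale:
  assumes X: "is_opsys X" and S: "is_opsys S" and u: "cp X S u" and r: "r \<ge> 0"
    and w: "\<And>x. x \<in> ocarrier X \<Longrightarrow> w x = oscal S (of_real r) (u x)"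
  shows "cp X S w"
  unfolding cp_def
proof (intro conjI ballI allI impI)
  fix x assume x: "x \<in> ocarrier X"
  show "w x \<in> ocarrier S"
    using w x os_scal[OF S cp_in[OF u x]] by simp
  show "w (oscal X c x) = oscal S c (w x)" for c
    using w x os_scal[OF X x] cp_scal[OF u x]
    by (simp flip: os_mult_scal[OF S cp_in[OF u x]] add: mult.commute)
  fix y assume y: "y \<in> ocarrier X"
  show "w (x + y) = w x + w y"
    using w x y os_add[OF X x y] cp_add[OF u x y] os_scal_add[OF S cp_in[OF u x] cp_in[OF u y]] by simp
next
  fix n A assume n: "0 < n" and A: "A \<in> ocone X n"
  have "(\<lambda>i j. w (A i j)) = mscal S (of_real r) (\<lambda>i j. u (A i j))"
    using w os_cone_entry[OF X n A] by (simp add: mscal_def)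
  then show "(\<lambda>i j. w (A i j)) \<in> ocone S n"
    using os_cone_scal[OF S n r cp_cone[OF u n A]] by simp
qed

lemma cp_sum:
  assumes X: "is_opsys X" and S: "is_opsys S" and u1: "cp X S u1" and u2: "cp X S u2"
    and w: "\<And>x. x \<in> ocarrier X \<Longrightarrow> w x = u1 x + u2 x"
  shows "cp X S w"
  unfolding cp_def
proof (intro conjI ballI allI impI)
  fix x assume x: "x \<in> ocarrier X"
  show "w x \<in> ocarrier S"
    using w x os_add[OF S cp_in[OF u1 x] cp_in[OF u2 x]] by simp
  show "w (oscal X c x) = oscal S c (w x)" for c
    using w x os_scal[OF X x] cp_scal[OF u1 x] cp_scal[OF u2 x]
      os_scal_add[OF S cp_in[OF u1 x] cp_in[OF u2 x]] by simp
  fix y assume y: "y \<in> ocarrier X"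
  show "w (x + y) = w x + w y"
    using w x y os_add[OF X x y] cp_add[OF u1 x y] cp_add[OF u2 x y] by (simp add: algebra_simps)
next
  fix n A assume n: "0 < n" and A: "A \<in> ocone X n"
  have "(\<lambda>i j. w (A i j)) = madd (\<lambda>i j. u1 (A i j)) (\<lambda>i j. u2 (A i j))"
    using w os_cone_entry[OF X n A] by (simp add: madd_def)
  then show "(\<lambda>i j. w (A i j)) \<in> ocone S n"
    using os_cone_add[OF S n cp_cone[OF u1 n A] cp_cone[OF u2 n A]] by simp
qed

definition antidiag2 :: "'v::zero \<Rightarrow> 'v \<Rightarrow> 'v mat" where
  "antidiag2 a b = (\<lambda>k l. if k < 2 \<and> l < 2 then (if k = l then 0 else if k = 0 then a else b) else 0)"

text \<open>Compressing \<open>[[0, a], [b, 0]] \<ge> 0\<close> with the vectors \<open>(1, t)\<close> gives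
\<open>t a + t\<^sup>* b \<ge> 0\<close> for every \<open>t\<close>; with \<open>-t\<close> in place of \<open>t\<close> this sum vanishes, and
\<open>t = 1, \<i>\<close> give \<open>a + b = 0 = a - b\<close>.\<close>
lemma antidiag2_cone_eq_zero:
  assumes X: "is_opsys X" and a: "a \<in> ocarrier X" and b: "b \<in> ocarrier X"
    and W: "antidiag2 a b \<in> ocone X 2"
  shows "a = 0"
proof -
  have P: "mat1 (oscal X t a + oscal X (cnj t) b) \<in> ocone X 1" for t
  proof -
    let ?\<beta> = "\<lambda>k i. if k = 0 then 1 else t"
    have "congr X 2 1 ?\<beta> (antidiag2 a b) = mat1 (oscal X t a + oscal X (cnj t) b)"
      by (auto simp: fun_eq_iff congr_def antidiag2_def mat1_def numeral_2_eq_2 oscal_zero_right[OF X])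
    then show ?thesis using os_cone_congr[OF X _ _ W, of 1 ?\<beta>] by simp
  qed
  have Z: "oscal X t a + oscal X (cnj t) b = 0" for t
  proof -
    have "(\<lambda>i j. - mat1 (oscal X t a + oscal X (cnj t) b) i j) = mat1 (oscal X (-t) a + oscal X (cnj (-t)) b)"
      by (auto simp: fun_eq_iff mat1_def oscal_uminus_left[OF X a] oscal_uminus_left[OF X b])
    then show ?thesis
      using os_cone_proper[OF X _ P[of t]] P[of "-t"] by (simp add: mat1_eq_zero_iff)
  qed
  have ab: "a + b = 0"
    using Z[of 1] os_one_scal[OF X a] os_one_scal[OF X b] by simp
  have "oscal X \<i> a = oscal X \<i> b"
    using Z[of \<i>] oscal_uminus_left[OF X b, of \<i>] by (simp add: add_eq_0_iff2)
  then have "oscal X (- \<i>) (oscal X \<i> a) = oscal X (- \<i>) (oscal X \<i> b)"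
    by simp
  then have "a = b"
    using os_mult_scal[OF X a, of "-\<i>" "\<i>"] os_mult_scal[OF X b, of "-\<i>" "\<i>"]
      os_one_scal[OF X a] os_one_scal[OF X b] by simp
  then have "oscal X 2 a = 0"
    using ab os_add_scal[OF X a, of 1 1] os_one_scal[OF X a] by simp
  then have "oscal X (1/2) (oscal X 2 a) = 0"
    using oscal_zero_right[OF X] by simp
  then show ?thesis
    using os_mult_scal[OF X a, of "1/2" 2] os_one_scal[OF X a] by simp
qed

definition norm_mat :: "'v::ab_group_add opsys \<Rightarrow> real \<Rightarrow> 'v \<Rightarrow> 'v mat" where
  "norm_mat X r x = (\<lambda>i j. if i < 2 \<and> j < 2 then
     (if i = j then oscal X (of_real r) (ounit X) else if i = 0 then x else ostar X x) else 0)"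

lemma opnorm_norm_mat: "opnorm X x = Inf {r. r \<ge> 0 \<and> norm_mat X r x \<in> ocone X 2}"
  unfolding opnorm_def norm_mat_def by simp

lemma norm_mat_cone_ex:
  assumes X: "is_opsys X" and x: "x \<in> ocarrier X"
  obtains r :: real where "r > 0" "norm_mat X r x \<in> ocone X 2"
proof -
  have "antidiag2 x (ostar X x) \<in> herm X 2"
    using x os_star[OF X x] os_zero[OF X] os_star_star[OF X x] ostar_zero[OF X]
    unfolding herm_def Mn_def antidiag2_def by auto
  then obtain r :: real where "r > 0" "madd (mscal X (of_real r) (unitm X 2)) (antidiag2 x (ostar X x)) \<in> ocone X 2"
    using os_archimedean[OF X, of 2] by auto
  moreover have "madd (mscal X (of_real r) (unitm X 2)) (antidiag2 x (ostar X x)) = norm_mat X r x"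
    by (auto simp: fun_eq_iff madd_def mscal_def unitm_def antidiag2_def norm_mat_def oscal_zero_right[OF X])
  ultimately show ?thesis using that by simp
qed

lemma opnorm_nonneg:
  assumes "is_opsys X" and "x \<in> ocarrier X"
  shows "opnorm X x \<ge> 0"
proof -
  obtain r :: real where "r > 0" "norm_mat X r x \<in> ocone X 2"
    using norm_mat_cone_ex[OF assms] .
  then have "r \<in> {r. r \<ge> 0 \<and> norm_mat X r x \<in> ocone X 2}"
    by simp
  then show ?thesis
    unfolding opnorm_norm_mat by (intro cInf_greatest) auto
qed

lemma cp_eq_zero_if_unit_zero:
  assumes X: "is_opsys X" and w: "cp X X w" and w1: "w (ounit X) = 0" and x: "x \<in> ocarrier X"
  shows "w x = 0"
proof (rule antidiag2_cone_eq_zero[OF X cp_in[OF w x] cp_in[OF w os_star[OF X x]]])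
  obtain r :: real where "r > 0" and N: "norm_mat X r x \<in> ocone X 2"
    using norm_mat_cone_ex[OF X x] .
  have "w (oscal X (of_real r) (ounit X)) = 0"
    using cp_scal[OF w os_unit[OF X]] w1 oscal_zero_right[OF X] by simp
  then have "(\<lambda>k l. w (norm_mat X r x k l)) = antidiag2 (w x) (w (ostar X x))"
    by (auto simp: fun_eq_iff norm_mat_def antidiag2_def cp_0[OF X w])
  then show "antidiag2 (w x) (w (ostar X x)) \<in> ocone X 2"
    using cp_cone[OF w _ N] by simp
qed

lemma norm_mat_scalar_unit_cone:
  assumes X: "is_opsys X" and s: "s \<ge> 0"
  shows "norm_mat X s (oscal X (of_real s) (ounit X)) \<in> ocone X 2"
proof -
  note U = os_unit[OF X]
  have "mscal X (of_real s) (unitm X 1) \<in> ocone X 1"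
    by (rule os_cone_scal[OF X _ s unitm_cone[OF X]]) simp_all
  then have "mat1 (oscal X (of_real s) (ounit X)) \<in> ocone X 1"
    unfolding unitm_1 mscal_mat1[OF X] .
  then have "congr X 1 2 (\<lambda>k i. 1) (mat1 (oscal X (of_real s) (ounit X))) \<in> ocone X 2"
    by (rule os_cone_congr[OF X, rotated 2]) simp_all
  moreover have "congr X 1 2 (\<lambda>k i. 1) (mat1 (oscal X (of_real s) (ounit X)))
      = norm_mat X s (oscal X (of_real s) (ounit X))"
    using os_scal[OF X U] by (auto simp: fun_eq_iff congr_def mat1_def norm_mat_def os_one_scal[OF X]
        os_star_scal[OF X U] os_star_unit[OF X])
  ultimately show ?thesis by simp
qed

lemma opnorm_scalar_unit_le:
  assumes "is_opsys X" and "s \<ge> 0"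
  shows "opnorm X (oscal X (of_real s) (ounit X)) \<le> s"
  unfolding opnorm_norm_mat
  by (rule cInf_lower) (use norm_mat_scalar_unit_cone[OF assms] assms(2) in auto)

lemma congr_norm_mat_scalar_unit:
  assumes X: "is_opsys X"
  shows "congr X 2 1 (\<lambda>k i. if k = 0 then 1 else -1) (norm_mat X r (oscal X (of_real d) (ounit X)))
       = mat1 (oscal X (of_real (2 * (r - d))) (ounit X))"
proof -
  note U = os_unit[OF X]
  let ?\<beta> = "\<lambda>(k::nat) (i::nat). if k = 0 then 1 else (-1::complex)"
  let ?N = "norm_mat X r (oscal X (of_real d) (ounit X))"
  let ?c = "\<lambda>(k::nat) (l::nat). if k = l then complex_of_real r else of_real d"
  have Nkl: "?N k l = oscal X (?c k l) (ounit X)" if "k < 2" "l < 2" for k l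
    using that by (auto simp: norm_mat_def os_star_scal[OF X U] os_star_unit[OF X])
  have "(\<Sum>k<2. \<Sum>l<2. oscal X (cnj (?\<beta> k 0) * ?\<beta> l 0) (?N k l))
      = (\<Sum>k<2. \<Sum>l<2. oscal X (cnj (?\<beta> k 0) * ?\<beta> l 0 * ?c k l) (ounit X))"
    by (intro sum.cong refl) (simp add: Nkl os_mult_scal[OF X U])
  also have "\<dots> = oscal X (\<Sum>k<2. \<Sum>l<2. cnj (?\<beta> k 0) * ?\<beta> l 0 * ?c k l) (ounit X)"
    by (simp add: oscal_sum[OF X U])
  also have "(\<Sum>k<2. \<Sum>l<2. cnj (?\<beta> k 0) * ?\<beta> l 0 * ?c k l) = of_real (2 * (r - d))"
    by (simp add: numeral_2_eq_2)
  finally show ?thesis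
    unfolding congr_def mat1_def by (auto simp: fun_eq_iff)
qed

lemma opnorm_scalar_unit_ge:
  assumes X: "is_opsys X" and u: "ounit X \<noteq> 0" and d: "d \<ge> 0"
  shows "opnorm X (oscal X (of_real d) (ounit X)) \<ge> d"
  unfolding opnorm_norm_mat
proof (rule cInf_greatest)
  show "{r. r \<ge> 0 \<and> norm_mat X r (oscal X (of_real d) (ounit X)) \<in> ocone X 2} \<noteq> {}"
    using norm_mat_scalar_unit_cone[OF X d] d by auto
next
  fix r assume "r \<in> {r. r \<ge> 0 \<and> norm_mat X r (oscal X (of_real d) (ounit X)) \<in> ocone X 2}"
  then have "norm_mat X r (oscal X (of_real d) (ounit X)) \<in> ocone X 2"
    by simp
  then have "congr X 2 1 (\<lambda>k i. if k = 0 then 1 else -1) (norm_mat X r (oscal X (of_real d) (ounit X)))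
      \<in> ocone X 1"
    by (rule os_cone_congr[OF X, rotated 2]) simp_all
  then have "mat1 (oscal X (of_real (2 * (r - d))) (ounit X)) \<in> ocone X 1"
    unfolding congr_norm_mat_scalar_unit[OF X] .
  then obtain \<rho> where "\<rho> \<ge> 0" "complex_of_real (2 * (r - d)) = of_real \<rho>"
    by (rule scalar_unit_cone1E[OF X u])
  then have "2 * (r - d) \<ge> 0"
    by (simp only: of_real_eq_iff)
  then show "d \<le> r"
    by simp
qed

lemma linfun_0: "is_opsys X \<Longrightarrow> f \<in> linfun X \<Longrightarrow> f 0 = 0"
  unfolding linfun_def using os_zero[of X] by force

lemma linfun_diff:
  assumes "is_opsys X" and "f \<in> linfun X" and "x \<in> ocarrier X" and "y \<in> ocarrier X"
  shows "f (x - y) = f x - f y"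
proof -
  have "f (x - y + y) = f (x - y) + f y"
    using assms os_diff unfolding linfun_def by blast
  then show ?thesis by simp
qed

lemma linfun_comp_cp:
  assumes X: "is_opsys X" and u: "cp X X u" and f: "f \<in> linfun X"
  shows "(\<lambda>x. if x \<in> ocarrier X then f (u x) else 0) \<in> linfun X"
  using u f os_add[OF X] os_scal[OF X] unfolding cp_def linfun_def by auto

lemma tensor_os_simps:
  "ocarrier (tensor_os X Y R) = tens_span X Y (ocarrier X) (ocarrier Y)"
  "oscal (tensor_os X Y R) c t = (\<lambda>f g. c * t f g)"
  "ounit (tensor_os X Y R) = tensor X Y (ounit X) (ounit Y)"
  by (simp_all add: tensor_os_def)

lemma tensor_oscal:
  assumes "p \<in> ocarrier X" and "q \<in> ocarrier Y"
  shows "tensor X Y (oscal X c p) (oscal Y d q) f g = c * d * tensor X Y p q f g"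
proof (cases "f \<in> linfun X \<and> g \<in> linfun Y")
  case True
  then have "f (oscal X c p) = c * f p" and "g (oscal Y d q) = d * g q"
    using assms unfolding linfun_def by blast+
  with True show ?thesis
    unfolding tensor_def by simp
qed (auto simp: tensor_def)

lemma tensor_zero_left: "is_opsys X \<Longrightarrow> tensor X Y 0 q = 0"
  unfolding tensor_def using linfun_0 by (auto simp: fun_eq_iff)

lemma tensor_zero_right: "is_opsys Y \<Longrightarrow> tensor X Y p 0 = 0"
  unfolding tensor_def using linfun_0 by (auto simp: fun_eq_iff)

lemma tens_spanE:
  assumes "t \<in> tens_span X Y A B"
  obtains N :: nat and a b
  where "\<forall>k<N. a k \<in> A \<and> b k \<in> B" "t = (\<lambda>f g. \<Sum>k<N. tensor X Y (a k) (b k) f g)"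
  using assms unfolding tens_span_def by blast

lemma tens_spanI:
  "\<forall>k<(N::nat). a k \<in> A \<and> b k \<in> B \<Longrightarrow> (\<lambda>f g. \<Sum>k<N. tensor X Y (a k) (b k) f g) \<in> tens_span X Y A B"
  unfolding tens_span_def by (rule CollectI, rule exI[of _ N], rule exI[of _ a], rule exI[of _ b]) simp

lemma zero_in_tens_span: "0 \<in> tens_span X Y A B"
  using tens_spanI[of 0 _ A _ B X Y] by (simp add: zero_fun_def)

lemma tmap_tensor_sum:
  assumes X: "is_opsys X" and Y: "is_opsys Y" and u: "cp X X u" and v: "cp Y Y v"
    and ab: "\<forall>k<N. a k \<in> ocarrier X \<and> b k \<in> ocarrier Y"
  shows "tmap X Y X Y u v (\<lambda>f g. \<Sum>k<N. tensor X Y (a k) (b k) f g)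
       = (\<lambda>f g. \<Sum>k<N. tensor X Y (u (a k)) (v (b k)) f g)"
  using linfun_comp_cp[OF X u] linfun_comp_cp[OF Y v] ab
  by (auto intro!: sum.cong simp: fun_eq_iff tmap_def tensor_def)

lemma tmap_eq_zero:
  assumes X: "is_opsys X" and Y: "is_opsys Y" and u: "cp X X u" and v: "cp Y Y v"
    and uv: "(\<forall>x\<in>ocarrier X. u x = 0) \<or> (\<forall>y\<in>ocarrier Y. v y = 0)"
    and t: "t \<in> tens_span X Y (ocarrier X) (ocarrier Y)"
  shows "tmap X Y X Y u v t = 0"
proof -
  obtain N :: nat and a b where ab: "\<forall>k<N. a k \<in> ocarrier X \<and> b k \<in> ocarrier Y"
    and t: "t = (\<lambda>f g. \<Sum>k<N. tensor X Y (a k) (b k) f g)"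
    using tens_spanE[OF t] .
  show ?thesis
    unfolding t tmap_tensor_sum[OF X Y u v ab]
    using ab uv by (auto simp: tensor_zero_left[OF X] tensor_zero_right[OF Y] fun_eq_iff)
qed

lemma tmap_diff_eq:
  assumes X: "is_opsys X" and Y: "is_opsys Y" and p: "cp X X \<phi>" and q: "cp Y Y \<psi>"
    and pm: "cp X X (\<lambda>x. \<phi> x - x)" and qm: "cp Y Y (\<lambda>y. \<psi> y - y)"
    and t: "t \<in> tens_span X Y (ocarrier X) (ocarrier Y)"
  shows "tmap X Y X Y \<phi> \<psi> t - t =
    tmap X Y X Y (\<lambda>x. \<phi> x - x) \<psi> t + tmap X Y X Y (\<lambda>x. x) (\<lambda>y. \<psi> y - y) t"
proof -
  obtain N :: nat and a b where ab: "\<forall>k<N. a k \<in> ocarrier X \<and> b k \<in> ocarrier Y"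
    and t: "t = (\<lambda>f g. \<Sum>k<N. tensor X Y (a k) (b k) f g)"
    using tens_spanE[OF t] .
  have "tensor X Y (\<phi> (a k)) (\<psi> (b k)) f g - tensor X Y (a k) (b k) f g =
      tensor X Y (\<phi> (a k) - a k) (\<psi> (b k)) f g + tensor X Y (a k) (\<psi> (b k) - b k) f g"
    if "k < N" for k f g
  proof (cases "f \<in> linfun X \<and> g \<in> linfun Y")
    case True
    have "a k \<in> ocarrier X" "b k \<in> ocarrier Y"
      using ab that by auto
    then have diffs: "f (\<phi> (a k) - a k) = f (\<phi> (a k)) - f (a k)" "g (\<psi> (b k) - b k) = g (\<psi> (b k)) - g (b k)"
      using linfun_diff[OF X _ cp_in[OF p]] linfun_diff[OF Y _ cp_in[OF q]] True by blast+
    show ?thesis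
      unfolding tensor_def diffs using True by (simp add: algebra_simps)
  qed (auto simp: tensor_def)
  then show ?thesis
    unfolding t tmap_tensor_sum[OF X Y p q ab] tmap_tensor_sum[OF X Y pm q ab]
      tmap_tensor_sum[OF X Y cp_id qm ab]
    by (simp add: fun_eq_iff sum_subtractf[symmetric] sum.distrib[symmetric])
qed

lemma ucp_rescale:
  assumes X: "is_opsys X" and w: "cp X X w" and w1: "w (ounit X) = oscal X (of_real c) (ounit X)"
    and c: "c > 0"
  shows "ucp X X (\<lambda>x. oscal X (of_real (1 / c)) (w x))"
  unfolding ucp_def
proof
  show "cp X X (\<lambda>x. oscal X (of_real (1 / c)) (w x))"
    by (rule cp_scale[OF X X w, of "1 / c"]) (use c in auto)
  have "oscal X (of_real (1 / c)) (oscal X (of_real c) (ounit X))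
      = oscal X (of_real (1 / c) * of_real c) (ounit X)"
    by (rule os_mult_scal[OF X os_unit[OF X], symmetric])
  also have "of_real (1 / c) * of_real c = (1::complex)"
    using c by (simp flip: of_real_mult)
  finally show "oscal X (of_real (1 / c)) (w (ounit X)) = ounit X"
    using w1 os_one_scal[OF X os_unit[OF X]] by simp
qed

lemma tmap_oscal:
  assumes X: "is_opsys X" and Y: "is_opsys Y" and w: "cp X X w" and v: "cp Y Y v"
    and t: "t \<in> tens_span X Y (ocarrier X) (ocarrier Y)" and a: "a \<ge> 0" and b: "b \<ge> 0"
  shows "tmap X Y X Y (\<lambda>x. oscal X (of_real a) (w x)) (\<lambda>y. oscal Y (of_real b) (v y)) t
       = (\<lambda>f g. of_real a * of_real b * tmap X Y X Y w v t f g)"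
proof -
  obtain N :: nat and x y where xy: "\<forall>k<N. x k \<in> ocarrier X \<and> y k \<in> ocarrier Y"
    and t: "t = (\<lambda>f g. \<Sum>k<N. tensor X Y (x k) (y k) f g)"
    using tens_spanE[OF t] .
  have "cp X X (\<lambda>x. oscal X (of_real a) (w x))" and "cp Y Y (\<lambda>y. oscal Y (of_real b) (v y))"
    by (rule cp_scale[OF X X w a], simp, rule cp_scale[OF Y Y v b], simp)
  note tmap_sums = tmap_tensor_sum[OF X Y w v xy] tmap_tensor_sum[OF X Y this xy]
  have "(\<Sum>k<N. tensor X Y (oscal X (of_real a) (w (x k))) (oscal Y (of_real b) (v (y k))) f g)
      = (\<Sum>k<N. of_real a * of_real b * tensor X Y (w (x k)) (v (y k)) f g)" for f g
    using tensor_oscal[OF cp_in[OF w] cp_in[OF v]] xy by (intro sum.cong) auto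
  then show ?thesis
    unfolding t tmap_sums by (simp add: sum_distrib_left)
qed

text \<open>Functoriality is only about unital maps; a map sending the unit to a positive multiple
\<open>c \<cdot> 1\<close> is \<open>c\<close> times a unital one, and the degenerate case \<open>c = 0\<close> is the zero map.\<close>
lemma cp_tmap:
  assumes X: "is_opsys X" and Y: "is_opsys Y" and R: "is_opsys (tensor_os X Y (\<alpha> X Y))"
    and F: "functorial \<alpha>"
    and w: "cp X X w" and w1: "w (ounit X) = oscal X (of_real c) (ounit X)" and c: "c \<ge> 0"
    and v: "cp Y Y v" and v1: "v (ounit Y) = oscal Y (of_real c') (ounit Y)" and c': "c' \<ge> 0"
  shows "cp (tensor_os X Y (\<alpha> X Y)) (tensor_os X Y (\<alpha> X Y)) (tmap X Y X Y w v)"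
proof (cases "c = 0 \<or> c' = 0")
  case True
  have "w (ounit X) = 0 \<or> v (ounit Y) = 0"
    using True w1 v1 oscal_zero_left[OF X os_unit[OF X]] oscal_zero_left[OF Y os_unit[OF Y]] by auto
  then have "(\<forall>x\<in>ocarrier X. w x = 0) \<or> (\<forall>y\<in>ocarrier Y. v y = 0)"
    using cp_eq_zero_if_unit_zero[OF X w] cp_eq_zero_if_unit_zero[OF Y v] by blast
  then have "\<forall>t\<in>ocarrier (tensor_os X Y (\<alpha> X Y)). tmap X Y X Y w v t = 0"
    using tmap_eq_zero[OF X Y w v] unfolding tensor_os_simps by blast
  then show ?thesis
    by (rule cp_zero[OF R R])
next
  case False
  then have pos: "c > 0" "c' > 0"
    using c c' by auto
  define w' where "w' = (\<lambda>x. oscal X (of_real (1 / c)) (w x))"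
  define v' where "v' = (\<lambda>y. oscal Y (of_real (1 / c')) (v y))"
  have uw: "ucp X X w'" and uv: "ucp Y Y v'"
    unfolding w'_def v'_def by (rule ucp_rescale[OF X w w1 pos(1)], rule ucp_rescale[OF Y v v1 pos(2)])
  then have "ucp (tensor_os X Y (\<alpha> X Y)) (tensor_os X Y (\<alpha> X Y)) (tmap X Y X Y w' v')"
    using F X Y unfolding functorial_def by blast
  then have U: "cp (tensor_os X Y (\<alpha> X Y)) (tensor_os X Y (\<alpha> X Y)) (tmap X Y X Y w' v')"
    unfolding ucp_def by blast
  have "complex_of_real (c * c') * (of_real (1 / c) * of_real (1 / c')) = 1"
    using pos by (simp flip: of_real_mult)
  then have cancel: "complex_of_real (c * c') * (of_real (1 / c) * of_real (1 / c') * z) = z" for z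
    by (simp only: mult.assoc[symmetric] mult_1_left)
  show ?thesis
  proof (rule cp_scale[OF R R U, of "c * c'"])
    show "c * c' \<ge> 0"
      using pos by simp
  next
    fix t assume "t \<in> ocarrier (tensor_os X Y (\<alpha> X Y))"
    then have "tmap X Y X Y w' v' t = (\<lambda>f g. of_real (1 / c) * of_real (1 / c') * tmap X Y X Y w v t f g)"
      unfolding w'_def v'_def tensor_os_simps by (rule tmap_oscal[OF X Y w v]) (use pos in auto)
    then show "tmap X Y X Y w v t =
        oscal (tensor_os X Y (\<alpha> X Y)) (of_real (c * c')) (tmap X Y X Y w' v' t)"
      by (simp only: tensor_os_simps cancel)
  qed
qed

lemma real_le_Inf_mult:
  fixes l :: real and f :: "'a \<Rightarrow> real" and g :: "'b \<Rightarrow> real"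
  assumes A: "A \<noteq> {}" and B: "B \<noteq> {}"
    and f1: "\<And>a. a \<in> A \<Longrightarrow> f a \<ge> 1" and g1: "\<And>b. b \<in> B \<Longrightarrow> g b \<ge> 1"
    and l: "\<And>a b. a \<in> A \<Longrightarrow> b \<in> B \<Longrightarrow> l \<le> f a * g b"
  shows "l \<le> Inf (f ` A) * Inf (g ` B)"
proof -
  have ia: "Inf (f ` A) \<ge> 1"
    using f1 A by (auto intro!: cInf_greatest)
  have "l / g b \<le> Inf (f ` A)" if b: "b \<in> B" for b
  proof (rule cInf_greatest)
    fix y assume "y \<in> f ` A"
    then obtain a where "a \<in> A" "y = f a" by blast
    then show "l / g b \<le> y"
      using l b g1 by (force simp: divide_le_eq)
  qed (use A in simp)
  then have "l / Inf (f ` A) \<le> y" if "y \<in> g ` B" for y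
    using that g1 ia by (smt (verit, best) divide_le_eq imageE mult.commute pos_divide_le_eq)
  then have "l / Inf (f ` A) \<le> Inf (g ` B)"
    using B by (intro cInf_greatest) auto
  then show ?thesis
    using ia by (simp add: divide_le_eq mult.commute)
qed

lemma ereal_le_INF_mult:
  fixes L :: ereal and f :: "'a \<Rightarrow> real" and g :: "'b \<Rightarrow> real"
  assumes f1: "\<And>a. a \<in> A \<Longrightarrow> f a \<ge> 1" and g1: "\<And>b. b \<in> B \<Longrightarrow> g b \<ge> 1"
    and L: "\<And>a b. a \<in> A \<Longrightarrow> b \<in> B \<Longrightarrow> L \<le> ereal (f a * g b)"
  shows "L \<le> (INF a\<in>A. ereal (f a)) * (INF b\<in>B. ereal (g b))"
proof (cases "A = {} \<or> B = {}")
  case True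
  have "(INF a\<in>A. ereal (f a)) \<ge> 1" and "(INF b\<in>B. ereal (g b)) \<ge> 1"
    using f1 g1 by (auto intro: INF_greatest)
  then have "(INF a\<in>A. ereal (f a)) > 0" and "(INF b\<in>B. ereal (g b)) > 0"
    by (auto intro: less_le_trans[of 0 1])
  with True have infinite: "(INF a\<in>A. ereal (f a)) * (INF b\<in>B. ereal (g b)) = \<infinity>"
    by (elim disjE) (auto simp: top_ereal_def)
  show ?thesis
    unfolding infinite by simp
next
  case False
  then have ne: "A \<noteq> {}" "B \<noteq> {}" by auto
  have "L \<le> ereal (Inf (f ` A) * Inf (g ` B))"
  proof (cases L)
    case (real l)
    then show ?thesis
      using real_le_Inf_mult[OF ne f1 g1, where l = l] L by simp
  next
    case PInf
    then show ?thesis using ne L by force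
  qed simp
  also have "\<dots> \<le> (INF a\<in>A. ereal (f a)) * (INF b\<in>B. ereal (g b))"
  proof -
    have bdd: "bdd_below (f ` A)" "bdd_below (g ` B)"
      using f1 g1 by (auto simp: bdd_below_def)
    have ia: "Inf (f ` A) \<ge> 1" and ib: "Inf (g ` B) \<ge> 1"
      using f1 g1 ne by (auto intro!: cInf_greatest)
    show ?thesis
      unfolding times_ereal.simps(1)[symmetric]
      by (rule ereal_mult_mono') (use ia ib cInf_lower[OF _ bdd(1)] cInf_lower[OF _ bdd(2)] in
          \<open>auto intro!: INF_greatest\<close>)
  qed
  finally show ?thesis .
qed

definition cp_index_maps :: "('v::ab_group_add) opsys \<Rightarrow> 'v opsys \<Rightarrow> ('v \<Rightarrow> 'v) set" where
  "cp_index_maps X X0 = {\<phi>. cp X X \<phi> \<and>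
      (\<forall>c. \<exists>d. \<phi> (oscal X c (ounit X)) = oscal X d (ounit X)) \<and>
      (\<forall>x\<in>ocarrier X. \<phi> x \<in> ocarrier X0) \<and> cp X X (\<lambda>x. \<phi> x - x)}"

lemma ind_cp_eq_INF: "ind_cp X X0 = (INF \<phi>\<in>cp_index_maps X X0. ereal (opnorm X (\<phi> (ounit X))))"
  unfolding ind_cp_def cp_index_maps_def by (intro arg_cong[where f = Inf]) auto

lemma ind_cp_le: "\<phi> \<in> cp_index_maps X X0 \<Longrightarrow> ind_cp X X0 \<le> ereal (opnorm X (\<phi> (ounit X)))"
  unfolding ind_cp_eq_INF by (rule INF_lower)

lemma ind_cp_nonneg:
  assumes X: "is_opsys X"
  shows "ind_cp X X0 \<ge> 0"
  unfolding ind_cp_eq_INF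
proof (rule INF_greatest)
  fix \<phi> assume "\<phi> \<in> cp_index_maps X X0"
  then have "\<phi> (ounit X) \<in> ocarrier X"
    using cp_in[OF _ os_unit[OF X]] unfolding cp_index_maps_def by blast
  then show "0 \<le> ereal (opnorm X (\<phi> (ounit X)))"
    using opnorm_nonneg[OF X] by simp
qed

lemma ind_cp_le_zero_if_unit_zero:
  assumes X: "is_opsys X" and u: "ounit X = 0" and X0: "0 \<in> ocarrier X0"
  shows "ind_cp X X0 \<le> 0"
proof -
  have triv: "x = 0" if "x \<in> ocarrier X" for x
    using cp_eq_zero_if_unit_zero[OF X cp_id] u that by simp
  have "(\<lambda>x. x) \<in> cp_index_maps X X0"
    unfolding cp_index_maps_def
  proof (intro CollectI conjI allI ballI cp_id cp_zero[OF X X])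
    show "\<exists>d. oscal X c (ounit X) = oscal X d (ounit X)" for c
      by blast
    show "x \<in> ocarrier X0" if "x \<in> ocarrier X" for x
      using triv[OF that] X0 by simp
    show "x - x = 0" for x :: 'a
      by simp
  qed
  then have "ind_cp X X0 \<le> ereal (opnorm X (ounit X))"
    by (rule ind_cp_le)
  also have "ounit X = oscal X (of_real 0) (ounit X)"
    using u oscal_zero_right[OF X] by simp
  also have "ereal (opnorm X (oscal X (of_real 0) (ounit X))) \<le> 0"
    using opnorm_scalar_unit_le[OF X, of 0] by (simp add: zero_ereal_def)
  finally show ?thesis .
qed

lemma cp_index_map_unit:
  assumes X: "is_opsys X" and u: "ounit X \<noteq> 0" and \<phi>: "\<phi> \<in> cp_index_maps X X0"
  obtains r :: real where "r \<ge> 0" "\<phi> (ounit X) = oscal X (of_real (1 + r)) (ounit X)"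
proof -
  note U = os_unit[OF X]
  obtain d where "\<phi> (oscal X 1 (ounit X)) = oscal X d (ounit X)"
    using \<phi> unfolding cp_index_maps_def by blast
  then have d: "\<phi> (ounit X) = oscal X d (ounit X)"
    using os_one_scal[OF X U] by simp
  have q: "cp X X (\<lambda>x. \<phi> x - x)"
    using \<phi> unfolding cp_index_maps_def by blast
  have "mat1 (\<phi> (ounit X) - ounit X) \<in> ocone X 1"
    using cp_cone[OF q zero_less_one unitm_cone[OF X zero_less_one]] unfolding unitm_1 cp_mat1[OF X q] .
  moreover have "\<phi> (ounit X) - ounit X = oscal X (d - 1) (ounit X)"
    using d oscal_diff_left[OF X U, of d 1] os_one_scal[OF X U] by simp
  ultimately have "mat1 (oscal X (d - 1) (ounit X)) \<in> ocone X 1"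
    by simp
  then obtain \<rho> :: real where "\<rho> \<ge> 0" "d - 1 = of_real \<rho>"
    by (rule scalar_unit_cone1E[OF X u])
  moreover from this have "d = of_real (1 + \<rho>)"
    by (metis add.commute diff_add_cancel of_real_1 of_real_add)
  ultimately show ?thesis
    using that d by blast
qed

lemma opnorm_cp_index_map_ge_one:
  assumes "is_opsys X" and "ounit X \<noteq> 0" and "\<phi> \<in> cp_index_maps X X0"
  shows "opnorm X (\<phi> (ounit X)) \<ge> 1"
proof -
  obtain r :: real where "r \<ge> 0" "\<phi> (ounit X) = oscal X (of_real (1 + r)) (ounit X)"
    by (rule cp_index_map_unit[OF assms])
  then show ?thesis
    using opnorm_scalar_unit_ge[OF assms(1,2), of "1 + r"] by simp
qed

lemma tmap_unit:
  assumes X: "is_opsys X" and Y: "is_opsys Y" and p: "cp X X \<phi>" and q: "cp Y Y \<psi>"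
    and \<phi>1: "\<phi> (ounit X) = oscal X (of_real a) (ounit X)"
    and \<psi>1: "\<psi> (ounit Y) = oscal Y (of_real b) (ounit Y)"
  shows "tmap X Y X Y \<phi> \<psi> (ounit (tensor_os X Y R))
       = oscal (tensor_os X Y R) (of_real (a * b)) (ounit (tensor_os X Y R))"
proof -
  note UX = os_unit[OF X] and UY = os_unit[OF Y]
  have unit_sum: "ounit (tensor_os X Y R)
      = (\<lambda>f g. \<Sum>k<(1::nat). tensor X Y ((\<lambda>_. ounit X) k) ((\<lambda>_. ounit Y) k) f g)"
    by (simp add: tensor_os_simps)
  have "tmap X Y X Y \<phi> \<psi> (ounit (tensor_os X Y R))
      = (\<lambda>f g. \<Sum>k<(1::nat). tensor X Y (\<phi> ((\<lambda>_. ounit X) k)) (\<psi> ((\<lambda>_. ounit Y) k)) f g)"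
    by (subst unit_sum, rule tmap_tensor_sum[OF X Y p q]) (simp add: UX UY)
  also have "\<dots> = oscal (tensor_os X Y R) (of_real (a * b)) (ounit (tensor_os X Y R))"
    unfolding tensor_os_simps \<phi>1 \<psi>1 by (simp add: tensor_oscal[OF UX UY] fun_eq_iff)
  finally show ?thesis .
qed

lemma cp_tmap_minus_id:
  assumes X: "is_opsys X" and Y: "is_opsys Y" and R: "is_opsys (tensor_os X Y (\<alpha> X Y))"
    and F: "functorial \<alpha>"
    and p: "cp X X \<phi>" and pm: "cp X X (\<lambda>x. \<phi> x - x)"
    and \<phi>1: "\<phi> (ounit X) = oscal X (of_real (1 + r)) (ounit X)" and r: "r \<ge> 0"
    and q: "cp Y Y \<psi>" and qm: "cp Y Y (\<lambda>y. \<psi> y - y)"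
    and \<psi>1: "\<psi> (ounit Y) = oscal Y (of_real (1 + s)) (ounit Y)" and s: "s \<ge> 0"
  shows "cp (tensor_os X Y (\<alpha> X Y)) (tensor_os X Y (\<alpha> X Y)) (\<lambda>t. tmap X Y X Y \<phi> \<psi> t - t)"
proof -
  let ?R = "tensor_os X Y (\<alpha> X Y)"
  note UX = os_unit[OF X] and UY = os_unit[OF Y]
  have \<phi>m1: "\<phi> (ounit X) - ounit X = oscal X (of_real r) (ounit X)"
    using \<phi>1 os_add_scal[OF X UX, of 1 "of_real r"] os_one_scal[OF X UX] by simp
  have \<psi>m1: "\<psi> (ounit Y) - ounit Y = oscal Y (of_real s) (ounit Y)"
    using \<psi>1 os_add_scal[OF Y UY, of 1 "of_real s"] os_one_scal[OF Y UY] by simp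
  have id1: "(\<lambda>x. x) (ounit X) = oscal X (of_real 1) (ounit X)"
    using os_one_scal[OF X UX] by simp
  have "cp ?R ?R (tmap X Y X Y (\<lambda>x. \<phi> x - x) \<psi>)"
    by (rule cp_tmap[OF X Y R F pm _ r q \<psi>1]) (use \<phi>m1 s in auto)
  moreover have "cp ?R ?R (tmap X Y X Y (\<lambda>x. x) (\<lambda>y. \<psi> y - y))"
    by (rule cp_tmap[OF X Y R F cp_id id1 _ qm \<psi>m1 s]) simp
  moreover have "tmap X Y X Y \<phi> \<psi> t - t
      = tmap X Y X Y (\<lambda>x. \<phi> x - x) \<psi> t + tmap X Y X Y (\<lambda>x. x) (\<lambda>y. \<psi> y - y) t"
    if "t \<in> ocarrier ?R" for t
    using that unfolding tensor_os_simps by (rule tmap_diff_eq[OF X Y p q pm qm])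
  ultimately show ?thesis
    by (rule cp_sum[OF R R])
qed

lemma tmap_in_cp_index_maps:
  assumes X: "is_opsys X" and Y: "is_opsys Y" and uX: "ounit X \<noteq> 0" and uY: "ounit Y \<noteq> 0"
    and R: "is_opsys (tensor_os X Y (\<alpha> X Y))" and F: "functorial \<alpha>"
    and \<phi>: "\<phi> \<in> cp_index_maps X X0" and \<psi>: "\<psi> \<in> cp_index_maps Y Y0"
  shows "tmap X Y X Y \<phi> \<psi> \<in> cp_index_maps (tensor_os X Y (\<alpha> X Y))
           (restrict_os (tensor_os X Y (\<alpha> X Y)) (tens_span X Y (ocarrier X0) (ocarrier Y0)))"
proof -
  let ?R = "tensor_os X Y (\<alpha> X Y)"
  let ?\<Phi> = "tmap X Y X Y \<phi> \<psi>"
  note UX = os_unit[OF X] and UY = os_unit[OF Y]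
  obtain r where r: "r \<ge> 0" and \<phi>1: "\<phi> (ounit X) = oscal X (of_real (1 + r)) (ounit X)"
    using cp_index_map_unit[OF X uX \<phi>] .
  obtain s where s: "s \<ge> 0" and \<psi>1: "\<psi> (ounit Y) = oscal Y (of_real (1 + s)) (ounit Y)"
    using cp_index_map_unit[OF Y uY \<psi>] .
  have p: "cp X X \<phi>" and pm: "cp X X (\<lambda>x. \<phi> x - x)" and p0: "\<forall>x\<in>ocarrier X. \<phi> x \<in> ocarrier X0"
    using \<phi> unfolding cp_index_maps_def by auto
  have q: "cp Y Y \<psi>" and qm: "cp Y Y (\<lambda>y. \<psi> y - y)" and q0: "\<forall>y\<in>ocarrier Y. \<psi> y \<in> ocarrier Y0"
    using \<psi> unfolding cp_index_maps_def by auto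
  have cp\<Phi>: "cp ?R ?R ?\<Phi>"
    by (rule cp_tmap[OF X Y R F p \<phi>1 _ q \<psi>1]) (use r s in auto)
  have cp\<Phi>m: "cp ?R ?R (\<lambda>t. ?\<Phi> t - t)"
    by (rule cp_tmap_minus_id[OF X Y R F p pm \<phi>1 r q qm \<psi>1 s])
  show ?thesis
    unfolding cp_index_maps_def
  proof (intro CollectI conjI allI ballI cp\<Phi> cp\<Phi>m)
    fix c
    have "?\<Phi> (oscal ?R c (ounit ?R)) = oscal ?R c (?\<Phi> (ounit ?R))"
      by (rule cp_scal[OF cp\<Phi> os_unit[OF R]])
    also have "\<dots> = oscal ?R (c * of_real ((1 + r) * (1 + s))) (ounit ?R)"
      unfolding tmap_unit[OF X Y p q \<phi>1 \<psi>1] by (simp add: tensor_os_simps mult.assoc)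
    finally show "\<exists>d. ?\<Phi> (oscal ?R c (ounit ?R)) = oscal ?R d (ounit ?R)" by blast
  next
    fix t assume "t \<in> ocarrier ?R"
    then have "t \<in> tens_span X Y (ocarrier X) (ocarrier Y)"
      by (simp only: tensor_os_simps)
    then obtain N :: nat and a b where ab: "\<forall>k<N. a k \<in> ocarrier X \<and> b k \<in> ocarrier Y"
      and t: "t = (\<lambda>f g. \<Sum>k<N. tensor X Y (a k) (b k) f g)"
      by (rule tens_spanE)
    have "?\<Phi> t = (\<lambda>f g. \<Sum>k<N. tensor X Y (\<phi> (a k)) (\<psi> (b k)) f g)"
      unfolding t by (rule tmap_tensor_sum[OF X Y p q ab])
    also have "\<dots> \<in> tens_span X Y (ocarrier X0) (ocarrier Y0)"
      using ab p0 q0 by (intro tens_spanI) auto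
    finally show "?\<Phi> t \<in> ocarrier (restrict_os ?R (tens_span X Y (ocarrier X0) (ocarrier Y0)))"
      by (simp add: restrict_os_def)
  qed
qed

lemma ind_cp_tensor_le:
  assumes X: "is_opsys X" and Y: "is_opsys Y" and uX: "ounit X \<noteq> 0" and uY: "ounit Y \<noteq> 0"
    and R: "is_opsys (tensor_os X Y (\<alpha> X Y))" and F: "functorial \<alpha>"
    and \<phi>: "\<phi> \<in> cp_index_maps X X0" and \<psi>: "\<psi> \<in> cp_index_maps Y Y0"
  shows "ind_cp (tensor_os X Y (\<alpha> X Y))
           (restrict_os (tensor_os X Y (\<alpha> X Y)) (tens_span X Y (ocarrier X0) (ocarrier Y0)))
         \<le> ereal (opnorm X (\<phi> (ounit X)) * opnorm Y (\<psi> (ounit Y)))"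
proof -
  let ?R = "tensor_os X Y (\<alpha> X Y)"
  obtain r where r: "r \<ge> 0" and \<phi>1: "\<phi> (ounit X) = oscal X (of_real (1 + r)) (ounit X)"
    using cp_index_map_unit[OF X uX \<phi>] .
  obtain s where s: "s \<ge> 0" and \<psi>1: "\<psi> (ounit Y) = oscal Y (of_real (1 + s)) (ounit Y)"
    using cp_index_map_unit[OF Y uY \<psi>] .
  have "cp X X \<phi>" and "cp Y Y \<psi>"
    using \<phi> \<psi> unfolding cp_index_maps_def by auto
  note \<Phi>1 = tmap_unit[OF X Y this \<phi>1 \<psi>1, of "\<alpha> X Y"]
  have "ind_cp ?R (restrict_os ?R (tens_span X Y (ocarrier X0) (ocarrier Y0)))
      \<le> ereal (opnorm ?R (tmap X Y X Y \<phi> \<psi> (ounit ?R)))"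
    by (rule ind_cp_le[OF tmap_in_cp_index_maps[OF X Y uX uY R F \<phi> \<psi>]])
  also have "opnorm ?R (tmap X Y X Y \<phi> \<psi> (ounit ?R)) \<le> (1 + r) * (1 + s)"
    unfolding \<Phi>1 by (rule opnorm_scalar_unit_le[OF R]) (use r s in simp)
  also have "(1 + r) * (1 + s) \<le> opnorm X (\<phi> (ounit X)) * opnorm Y (\<psi> (ounit Y))"
    using opnorm_scalar_unit_ge[OF X uX, of "1 + r"] opnorm_scalar_unit_ge[OF Y uY, of "1 + s"] r s \<phi>1 \<psi>1
    by (intro mult_mono) auto
  finally show ?thesis by simp
qed

theorem proposition3p4:
  fixes \<alpha> :: "'x::ab_group_add opsys \<Rightarrow> 'y::ab_group_add opsys \<Rightarrow> nat \<Rightarrow> ('x, 'y) tens mat set"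
    and X X0 :: "'x opsys" and Y Y0 :: "'y opsys"
  assumes "os_tensor_product \<alpha>" and "functorial \<alpha>"
    and "subsystem X0 X" and "subsystem Y0 Y"
  shows "ind_cp (tensor_os X Y (\<alpha> X Y))
           (restrict_os (tensor_os X Y (\<alpha> X Y)) (tens_span X Y (ocarrier X0) (ocarrier Y0)))
         \<le> ind_cp X X0 * ind_cp Y Y0"
proof -
  have X: "is_opsys X" and Y: "is_opsys Y"
    using assms(3,4) unfolding subsystem_def by blast+
  then have "os_structure X Y (\<alpha> X Y)"
    using assms(1) unfolding os_tensor_product_def by blast
  then have R: "is_opsys (tensor_os X Y (\<alpha> X Y))"
    unfolding os_structure_def by (rule conjunct1)
  show ?thesis
  proof (cases "ounit X = 0 \<or> ounit Y = 0")
    case True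
    then have "ounit (tensor_os X Y (\<alpha> X Y)) = 0"
      by (auto simp: tensor_os_simps tensor_zero_left[OF X] tensor_zero_right[OF Y])
    then have "ind_cp (tensor_os X Y (\<alpha> X Y))
        (restrict_os (tensor_os X Y (\<alpha> X Y)) (tens_span X Y (ocarrier X0) (ocarrier Y0))) \<le> 0"
      by (intro ind_cp_le_zero_if_unit_zero[OF R]) (simp_all add: restrict_os_def zero_in_tens_span)
    also have "0 \<le> ind_cp X X0 * ind_cp Y Y0"
      using ind_cp_nonneg[OF X] ind_cp_nonneg[OF Y] by simp
    finally show ?thesis .
  next
    case False
    then have uX: "ounit X \<noteq> 0" and uY: "ounit Y \<noteq> 0"
      by simp_all
    show ?thesis
      unfolding ind_cp_eq_INF[of X] ind_cp_eq_INF[of Y]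
      by (rule ereal_le_INF_mult[OF opnorm_cp_index_map_ge_one[OF X uX]
            opnorm_cp_index_map_ge_one[OF Y uY] ind_cp_tensor_le[OF X Y uX uY R assms(2)]])
  qed
qed

end
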